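(* Let $\mathsf{k}$ be a field, $n\ge 2$, $R=\mathsf{k}[x_1,\dots,x_r]$, $S=R[t]$, $A=\mathsf{k}[t]/(t^n)$. Let $F_B\in Q_R$ be homogeneous of degree $j_B$ and $B=R/\operatorname{Ann}_R(F_B)$. Put $G_0=F_B$ and let $G_1,\dots,G_{n-1}\in Q_R$ be homogeneous with $\deg G_i=j_B+i$. Let $$F=T^{[n-1]}G_0+T^{[n-2]}G_1+\cdots+T^{[n-1-i]}G_i+\cdots+G_{n-1}\in Q_S,$$ and $C=S/\operatorname{Ann}_S(F)$. Define ideals $I_0\subseteq I_1\subseteq\cdots\subseteq I_{n-1}\subseteq R$ by $I_0=\operatorname{Ann}_R(G_0)$ and $I_i=(I_{i-1}:\operatorname{Ann}_R(G_i))$ for $1\le i\le n-1$. (1) If $I_i\circ G_{n-1-i}\subseteq R\circ F_B$ for all $i=0,\dots,n-1$, then the sequence $\mathsf{k}\to A\xrightarrow{\iota} C\xrightarrow{\pi} B\to\mathsf{k}$ is coexact and $C$ is a free extension with base $A$ and fiber $B$ (via $\iota,\pi$). (2) Conversely, if $C$ is a free extension with base $A$ and fiber $B$ (via $\iota,\pi$), then $I_0\circ G_i\subseteq \sum_{j=0}^{i-1}R\circ G_j$ for every $i\in[1,n-1]$.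
   Context: All rings are graded; $R$ standard graded. $Q_R=\mathsf{k}_{DP}[X_1,\dots,X_r]$ and $Q_S=\mathsf{k}_{DP}[X_1,\dots,X_r,T]$ are divided power rings (basis of divided monomials $X^{[a]}=X_1^{[a_1]}\cdots$, with $X_k^{[i]}X_k^{[j]}=\binom{i+j}{j}X_k^{[i+j]}$), on which $R$ (resp. $S$) acts by contraction: $x_i^s\circ X_i^{[k]}=X_i^{[k-s]}$ if $k\ge s$ and $0$ otherwise, $x_i$ acting trivially on the other variables, and similarly $t$ on $T$. For $G\in Q_R$, $R\circ G$ is the $R$-submodule generated by $G$ and $\operatorname{Ann}_R(G)=\{g\in R: g\circ G=0\}$. For ideals, $(I:J)=\{f\in R: fJ\subseteq I\}$. The map $\iota:A\to C$ is induced by the inclusion $\mathsf{k}[t]\subset S$ and $\pi:C\to B$ by $S\to R$, $x_i\mapsto x_i$, $t\mapsto 0$. For graded Artinian algebras $A,B,C$ with maps $\iota:A\to C$, $\pi:C\to B$, $C$ is a free extension with base $A$ and fiber $B$ if $\iota$ makes $C$ a free $A$-module and $\pi$ is surjective with $\ker\pi=(\iota(A_+))C$, where $A_+$ is the ideal of positive-degree elements; the sequence $\mathsf{k}\to A\to C\to B\to\mathsf{k}$ is coexact if $\pi$ is surjective and $\ker\pi=(\iota(A_+))C$. *)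

theory Defs
  imports "HOL-Library.Poly_Mapping" "HOL-Computational_Algebra.Polynomial"
begin

text \<open>Polynomial rings over a field 'k in variables indexed by a type 'x are represented as
  poly_mapping from exponent vectors to coefficients (exponent vector to coefficient), with the library's
  convolution product.  R = k[x_v | v :: 'v] with 'v finite (r = CARD('v));
  S = R[t] uses the variable type 'v option, where None is t and Some v is x_v.
  Divided power rings Q_R, Q_S use the same underlying type, the key a standing for the
  divided monomial X^[a]; their (divided power) product is dp_mult.\<close>

type_synonym ('x, 'k) mpoly = "('x \<Rightarrow>\<^sub>0 nat) \<Rightarrow>\<^sub>0 'k"

definition mdeg :: "('x \<Rightarrow>\<^sub>0 nat) \<Rightarrow> nat" where
  "mdeg a = (\<Sum>v\<in>Poly_Mapping.keys a. Poly_Mapping.lookup a v)"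

definition homogeneous :: "nat \<Rightarrow> ('x, 'k::zero) mpoly \<Rightarrow> bool" where
  "homogeneous d G \<longleftrightarrow> (\<forall>a\<in>Poly_Mapping.keys G. mdeg a = d)"

definition dp_mult :: "('x, 'k::comm_ring_1) mpoly \<Rightarrow> ('x, 'k) mpoly \<Rightarrow> ('x, 'k) mpoly" where
  "dp_mult G H = (\<Sum>a\<in>Poly_Mapping.keys G. \<Sum>b\<in>Poly_Mapping.keys H.
     Poly_Mapping.single (a + b)
       (Poly_Mapping.lookup G a * Poly_Mapping.lookup H b * of_nat (\<Prod>v\<in>Poly_Mapping.keys (a + b). (Poly_Mapping.lookup a v + Poly_Mapping.lookup b v) choose Poly_Mapping.lookup b v)))"

definition contract :: "('x, 'k::comm_ring_1) mpoly \<Rightarrow> ('x, 'k) mpoly \<Rightarrow> ('x, 'k) mpoly" where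
  "contract f G = (\<Sum>s\<in>Poly_Mapping.keys f. \<Sum>a\<in>Poly_Mapping.keys G.
     (if (\<forall>v. Poly_Mapping.lookup s v \<le> Poly_Mapping.lookup a v)
      then Poly_Mapping.single (a - s) (Poly_Mapping.lookup f s * Poly_Mapping.lookup G a) else 0))"

definition Ann :: "('x, 'k::comm_ring_1) mpoly \<Rightarrow> ('x, 'k) mpoly set" where
  "Ann G = {g. contract g G = 0}"

definition cyc :: "('x, 'k::comm_ring_1) mpoly \<Rightarrow> ('x, 'k) mpoly set" where
  "cyc G = {contract f G | f. True}"

definition contract_set :: "('x, 'k::comm_ring_1) mpoly set \<Rightarrow> ('x, 'k) mpoly \<Rightarrow> ('x, 'k) mpoly set" where
  "contract_set I G = {contract f G | f. f \<in> I}"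

definition sum_cyc :: "(nat \<Rightarrow> ('x, 'k::comm_ring_1) mpoly) \<Rightarrow> nat \<Rightarrow> ('x, 'k) mpoly set" where
  "sum_cyc G i = {(\<Sum>j<i. contract (f j) (G j)) | f. True}"

definition colon :: "'a::comm_ring_1 set \<Rightarrow> 'a set \<Rightarrow> 'a set" where
  "colon I J = {f. \<forall>g\<in>J. f * g \<in> I}"

fun Iseq :: "(nat \<Rightarrow> ('x, 'k::comm_ring_1) mpoly) \<Rightarrow> nat \<Rightarrow> ('x, 'k) mpoly set" where
  "Iseq G 0 = Ann (G 0)"
| "Iseq G (Suc i) = colon (Iseq G i) (Ann (G (Suc i)))"

definition lift_mon :: "('v::finite \<Rightarrow>\<^sub>0 nat) \<Rightarrow> ('v option \<Rightarrow>\<^sub>0 nat)" where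
  "lift_mon a = (\<Sum>v\<in>UNIV. Poly_Mapping.single (Some v) (Poly_Mapping.lookup a v))"

definition lift :: "('v::finite, 'k::comm_ring_1) mpoly \<Rightarrow> ('v option, 'k) mpoly" where
  "lift G = (\<Sum>a\<in>Poly_Mapping.keys G. Poly_Mapping.single (lift_mon a) (Poly_Mapping.lookup G a))"

definition restr_mon :: "('v::finite option \<Rightarrow>\<^sub>0 nat) \<Rightarrow> ('v \<Rightarrow>\<^sub>0 nat)" where
  "restr_mon m = (\<Sum>v\<in>UNIV. Poly_Mapping.single v (Poly_Mapping.lookup m (Some v)))"

definition eval_t0 :: "('v::finite option, 'k::comm_ring_1) mpoly \<Rightarrow> ('v, 'k) mpoly" where
  "eval_t0 g = (\<Sum>m\<in>Poly_Mapping.keys g. if Poly_Mapping.lookup m None = 0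
       then Poly_Mapping.single (restr_mon m) (Poly_Mapping.lookup g m) else 0)"

definition tpoly :: "'k::comm_ring_1 poly \<Rightarrow> ('v option, 'k) mpoly" where
  "tpoly p = (\<Sum>i\<le>degree p. Poly_Mapping.single (Poly_Mapping.single None i) (coeff p i))"

definition Tdp :: "nat \<Rightarrow> ('v option, 'k::comm_ring_1) mpoly" where
  "Tdp k = Poly_Mapping.single (Poly_Mapping.single None k) 1"

definition Fdual :: "nat \<Rightarrow> (nat \<Rightarrow> ('v::finite, 'k::comm_ring_1) mpoly) \<Rightarrow> ('v option, 'k) mpoly" where
  "Fdual n G = (\<Sum>i<n. dp_mult (Tdp (n - 1 - i)) (lift (G i)))"

text \<open>Algebras: A = k[t]/(t^n) (elements represented by 'k poly),
  C = S / Ann_S(F), B = R / Ann_R(F_B).  The maps are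
  iota [p] = [tpoly p] and pi [g] = [eval_t0 g].  In A, the class of p is zero iff t^n divides p,
  and [p] \<in> A_+ iff the constant coefficient of p is 0.\<close>

definition pi_surj :: "('v::finite, 'k::comm_ring_1) mpoly \<Rightarrow> ('v option, 'k) mpoly \<Rightarrow> bool" where
  "pi_surj FB F \<longleftrightarrow> (\<forall>r. \<exists>g. eval_t0 g - r \<in> Ann FB)"

text \<open>ker pi = (iota(A_+)) C, both sides as sets of classes in C, written via representatives in S.\<close>
definition ker_eq :: "('v::finite, 'k::comm_ring_1) mpoly \<Rightarrow> ('v option, 'k) mpoly \<Rightarrow> bool" where
  "ker_eq FB F \<longleftrightarrow>
     (\<forall>g. eval_t0 g \<in> Ann FB \<longleftrightarrow>
        (\<exists>m (a :: nat \<Rightarrow> 'k poly) (c :: nat \<Rightarrow> ('v option, 'k) mpoly).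
           (\<forall>k<m. coeff (a k) 0 = 0) \<and> g - (\<Sum>k<m. tpoly (a k) * c k) \<in> Ann F))"

definition coexact :: "('v::finite, 'k::comm_ring_1) mpoly \<Rightarrow> ('v option, 'k) mpoly \<Rightarrow> bool" where
  "coexact FB F \<longleftrightarrow> pi_surj FB F \<and> ker_eq FB F"

text \<open>C is a free A-module via iota (A = k[t]/(t^n)): there is a basis [b_0],...,[b_{m-1}].\<close>
definition free_over_A :: "nat \<Rightarrow> ('v::finite option, 'k::comm_ring_1) mpoly \<Rightarrow> bool" where
  "free_over_A n F \<longleftrightarrow>
     (\<exists>m (b :: nat \<Rightarrow> ('v option, 'k) mpoly).
        (\<forall>g. \<exists>a :: nat \<Rightarrow> 'k poly. g - (\<Sum>j<m. tpoly (a j) * b j) \<in> Ann F) \<and>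
        (\<forall>a :: nat \<Rightarrow> 'k poly. (\<Sum>j<m. tpoly (a j) * b j) \<in> Ann F \<longrightarrow>
            (\<forall>j<m. [:0, 1:] ^ n dvd a j)))"

definition free_extension :: "nat \<Rightarrow> ('v::finite, 'k::comm_ring_1) mpoly \<Rightarrow> ('v option, 'k) mpoly \<Rightarrow> bool" where
  "free_extension n FB F \<longleftrightarrow> free_over_A n F \<and> pi_surj FB F \<and> ker_eq FB F"

end

theory Submission imports Defs "HOL-Library.FuncSet" begin

text \<open>Write g \<in> S as \<Sum>_j t^j g_j with g_j \<in> R.  Then g \<circ> F = 0 is the triangular system
  \<Sum>_{j \<le> s} g_j \<circ> G_{s-j} = 0 for s < n, and in every solution g_s \<in> I_s.  Under the hypothesis
  I_i \<circ> G_{n-1-i} \<subseteq> R \<circ> F_B, the part of equation s coming from the already chosen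
  g_0, ..., g_{s-1} lies in R \<circ> F_B, so the system can be solved one level at a time with each
  g_s prescribed modulo Ann(F_B).  Prescribing only g_0 \<in> Ann(F_B) shows that ker \<pi> is generated
  by t; prescribing every g_s modulo the span of a k-basis of B shows that this basis, lifted to C,
  is an A-basis.  Conversely, the kernel condition applied to f \<in> Ann(F_B) yields a solution with
  g_0 = f, whose equation of level i says f \<circ> G_i \<in> \<Sum>_{j<i} R \<circ> G_j.\<close>

abbreviation lookup :: "('a \<Rightarrow>\<^sub>0 'b::zero) \<Rightarrow> 'a \<Rightarrow> 'b" where "lookup \<equiv> Poly_Mapping.lookup"
abbreviation keys :: "('a \<Rightarrow>\<^sub>0 'b::zero) \<Rightarrow> 'a set" where "keys \<equiv> Poly_Mapping.keys"
abbreviation single :: "'a \<Rightarrow> 'b::zero \<Rightarrow> 'a \<Rightarrow>\<^sub>0 'b" where "single \<equiv> Poly_Mapping.single"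

section \<open>Contraction as a module action\<close>

lemma sum_single_lookup: "(\<Sum>a\<in>keys p. single a (lookup p a)) = p"
  by (rule poly_mapping_eqI) (simp add: lookup_sum lookup_single when_def in_keys_iff cong: if_cong)

lemma le_and_diff_eq_iff:
  fixes a s b :: "'x \<Rightarrow>\<^sub>0 nat"
  shows "((\<forall>v. lookup s v \<le> lookup a v) \<and> a - s = b) \<longleftrightarrow> a = b + s"
proof
  assume "(\<forall>v. lookup s v \<le> lookup a v) \<and> a - s = b"
  then show "a = b + s"
    by (intro poly_mapping_eqI) (auto simp: lookup_add lookup_minus)
qed (auto simp: lookup_add)

lemma lookup_contract: "lookup (contract f G) b = (\<Sum>s\<in>keys f. lookup f s * lookup G (b + s))"
proof -
  have "lookup (contract f G) b =
      (\<Sum>s\<in>keys f. \<Sum>a\<in>keys G. if a = b + s then lookup f s * lookup G a else 0)"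
    unfolding contract_def lookup_sum
    by (intro sum.cong refl) (use le_and_diff_eq_iff in \<open>auto simp: lookup_single when_def\<close>)
  also have "\<dots> = (\<Sum>s\<in>keys f. lookup f s * lookup G (b + s))"
    by (rule sum.cong) (auto simp: in_keys_iff)
  finally show ?thesis .
qed

lemma lookup_contract_superset:
  assumes "finite A" "keys f \<subseteq> A"
  shows "lookup (contract f G) b = (\<Sum>s\<in>A. lookup f s * lookup G (b + s))"
  unfolding lookup_contract
  by (rule sum.mono_neutral_left) (use assms in \<open>auto simp: in_keys_iff\<close>)

lemma lookup_contract_single: "lookup (contract (single s c) H) b = c * lookup H (b + s)"
  by (simp add: lookup_contract_superset[of "{s}"])

lemma contract_add_left: "contract (f + g) H = contract f H + contract g H"
proof (rule poly_mapping_eqI)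
  fix b
  have fin: "finite (keys f \<union> keys g \<union> keys (f + g))" by simp
  show "lookup (contract (f + g) H) b = lookup (contract f H + contract g H) b"
    unfolding lookup_add
    by (subst (1 2 3) lookup_contract_superset[OF fin]) (auto simp: lookup_add sum.distrib distrib_right)
qed

lemma contract_add_right: "contract f (G + H) = contract f G + contract f H"
  by (rule poly_mapping_eqI) (simp add: lookup_add lookup_contract sum.distrib distrib_left)

lemma contract_zero_left [simp]: "contract 0 H = 0"
  and contract_zero_right [simp]: "contract f 0 = 0"
  by (simp_all add: contract_def)

lemma contract_uminus_left: "contract (- f) H = - contract f H"
  using contract_add_left[of f "- f" H] by (simp add: eq_neg_iff_add_eq_0 add.commute)

lemma contract_sum_left: "contract (\<Sum>i\<in>I. f i) H = (\<Sum>i\<in>I. contract (f i) H)"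
  by (induction I rule: infinite_finite_induct) (auto simp: contract_add_left)

lemma contract_sum_right: "contract f (\<Sum>i\<in>I. H i) = (\<Sum>i\<in>I. contract f (H i))"
  by (induction I rule: infinite_finite_induct) (auto simp: contract_add_right)

lemma contract_single_contract_single:
  "contract (single s c) (contract (single u d) H) = contract (single s c * single u d) H"
  by (rule poly_mapping_eqI)
    (simp add: lookup_contract_single mult_single add.assoc add.commute[of u s] mult.assoc)

lemma contract_mult: "contract (f * g) H = contract f (contract g H)"
proof -
  have "f * g = (\<Sum>l\<in>keys f. single l (lookup f l)) * (\<Sum>q\<in>keys g. single q (lookup g q))"
    by (simp add: sum_single_lookup)
  then have "contract (f * g) H =
      (\<Sum>l\<in>keys f. \<Sum>q\<in>keys g. contract (single l (lookup f l)) (contract (single q (lookup g q)) H))"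
    by (simp add: sum_product contract_sum_left contract_single_contract_single)
  also have "\<dots> = contract (\<Sum>l\<in>keys f. single l (lookup f l)) (contract (\<Sum>q\<in>keys g. single q (lookup g q)) H)"
    by (simp add: contract_sum_left contract_sum_right sum.swap[of _ "keys g" "keys f"])
  finally show ?thesis
    by (simp add: sum_single_lookup)
qed

lemma contract_commute: "contract f (contract g H) = contract g (contract f H)"
  by (metis contract_mult mult.commute)

lemma lookup_single_zero_mult: "lookup (single 0 c * r) u = c * lookup r u"
proof -
  have "single 0 c * r = (\<Sum>w\<in>keys r. single w (c * lookup r w))"
    by (subst sum_single_lookup[symmetric]) (simp add: sum_distrib_left mult_single)
  then show ?thesis
    by (simp add: lookup_sum lookup_single when_def in_keys_iff cong: if_cong)
qed

lemma single_zero_one_mult [simp]: "single 0 (1::'k::comm_ring_1) * (r :: ('x, 'k) mpoly) = r"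
  by (simp add: one_poly_mapping.abs_eq[symmetric] single.abs_eq[symmetric])


section \<open>Annihilators and the ideals \<open>I\<^sub>i\<close>\<close>

lemma Ann_mult: "f \<in> Ann H \<Longrightarrow> g * f \<in> Ann H"
  by (simp add: Ann_def contract_mult)

lemma Ann_add: "f \<in> Ann H \<Longrightarrow> g \<in> Ann H \<Longrightarrow> f + g \<in> Ann H"
  by (simp add: Ann_def contract_add_left)

lemma zero_in_Ann: "0 \<in> Ann H"
  by (simp add: Ann_def)

lemma Iseq_mult: "f \<in> Iseq G i \<Longrightarrow> g * f \<in> Iseq G i"
proof (induction i arbitrary: f)
  case 0
  then show ?case by (simp add: Ann_mult)
next
  case (Suc i)
  then show ?case
    by (auto simp: colon_def mult.assoc intro: Suc.IH)
qed

lemma Iseq_mono: "i \<le> j \<Longrightarrow> Iseq G i \<subseteq> Iseq G j"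
proof (induction j rule: dec_induct)
  case (step j)
  have "Iseq G j \<subseteq> Iseq G (Suc j)"
    using Iseq_mult[of _ G j] by (auto simp: colon_def mult.commute)
  with step.IH show ?case by blast
qed simp

lemma Iseq_memI:
  "contract f (G 0) = (\<Sum>i\<in>{1..s}. contract (q i) (G i)) \<Longrightarrow> f \<in> Iseq G s"
proof (induction s arbitrary: f q)
  case 0
  then show ?case by (simp add: Ann_def)
next
  case (Suc s)
  have "f * u \<in> Iseq G s" if u: "u \<in> Ann (G (Suc s))" for u
  proof (rule Suc.IH)
    have "contract u (contract (q (Suc s)) (G (Suc s))) = 0"
      using u by (simp add: contract_commute[of u] Ann_def)
    then show "contract (f * u) (G 0) = (\<Sum>i\<in>{1..s}. contract (u * q i) (G i))"
      using Suc.prems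
      by (simp add: contract_mult contract_commute[of f] contract_sum_right contract_add_right)
  qed
  then show ?case
    by (simp add: colon_def)
qed

lemma cyc_sum: "(\<And>i. i \<in> I \<Longrightarrow> x i \<in> cyc H) \<Longrightarrow> (\<Sum>i\<in>I. x i) \<in> cyc H"
proof (induction I rule: infinite_finite_induct)
  case (insert i I)
  obtain f g where "x i = contract f H" "(\<Sum>i\<in>I. x i) = contract g H"
    using insert.IH insert.prems by (force simp: cyc_def)
  then have "(\<Sum>i\<in>insert i I. x i) = contract (f + g) H"
    using insert.hyps by (simp add: contract_add_left)
  then show ?case
    by (auto simp: cyc_def)
qed (auto simp: cyc_def intro: exI[of _ 0])


section \<open>Coefficients in \<open>t\<close> of elements of \<open>S\<close>\<close>

abbreviation tmon :: "nat \<Rightarrow> ('v option \<Rightarrow>\<^sub>0 nat)" where "tmon j \<equiv> single None j"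

lemma lookup_lift_mon: "lookup (lift_mon a) x = (case x of None \<Rightarrow> 0 | Some v \<Rightarrow> lookup a v)"
  by (cases x) (simp_all add: lift_mon_def lookup_sum lookup_single when_def)

lemma lookup_restr_mon: "lookup (restr_mon m) v = lookup m (Some v)"
  by (simp add: restr_mon_def lookup_sum lookup_single when_def)

lemma option_mon_eq_iff:
  "m = m' \<longleftrightarrow> lookup m None = lookup m' None \<and> (\<forall>v. lookup m (Some v) = lookup m' (Some v))"
  by (metis option.exhaust poly_mapping_eqI)

lemma tmon_lift_mon_decomp: "m = tmon (lookup m None) + lift_mon (restr_mon m)"
  by (subst option_mon_eq_iff) (simp add: lookup_add lookup_lift_mon lookup_restr_mon lookup_single)

lemma tmon_lift_mon_inject: "tmon j + lift_mon u = tmon j' + lift_mon u' \<longleftrightarrow> j = j' \<and> u = u'"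
proof
  assume h: "tmon j + lift_mon u = tmon j' + lift_mon u'"
  have "lookup (tmon j + lift_mon u) x = lookup (tmon j' + lift_mon u') x" for x
    using h by simp
  from this[of None] this[of "Some v" for v] show "j = j' \<and> u = u'"
    by (auto simp: lookup_add lookup_lift_mon lookup_single poly_mapping_eq_iff fun_eq_iff)
qed simp

lemma tmon_lift_mon_eq_iff: "m = tmon j + lift_mon u \<longleftrightarrow> lookup m None = j \<and> restr_mon m = u"
  by (metis tmon_lift_mon_decomp tmon_lift_mon_inject)

lemma lookup_tmon_lift_mon_None [simp]: "lookup (tmon j + lift_mon u) None = j"
  and restr_mon_tmon_lift_mon [simp]: "restr_mon (tmon j + lift_mon u) = u"
  using tmon_lift_mon_eq_iff by blast+

lemma restr_mon_lift_mon [simp]: "restr_mon (lift_mon u) = u"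
  using restr_mon_tmon_lift_mon[of 0 u] by simp

lemma lift_mon_eq_iff: "lift_mon a = m \<longleftrightarrow> lookup m None = 0 \<and> a = restr_mon m"
  using tmon_lift_mon_eq_iff[of m 0 a] by auto

lemma lift_mon_add: "lift_mon (a + b) = lift_mon a + lift_mon b"
  by (subst option_mon_eq_iff) (simp add: lookup_add lookup_lift_mon)

definition tcoeff :: "('v::finite option, 'k::comm_ring_1) mpoly \<Rightarrow> nat \<Rightarrow> ('v, 'k) mpoly" where
  "tcoeff g j = (\<Sum>m\<in>keys g. if lookup m None = j then single (restr_mon m) (lookup g m) else 0)"

lemma eval_t0_eq_tcoeff: "eval_t0 g = tcoeff g 0"
  by (simp add: eval_t0_def tcoeff_def)

lemma lookup_tcoeff: "lookup (tcoeff g j) u = lookup g (tmon j + lift_mon u)"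
proof -
  have "lookup (tcoeff g j) u = (\<Sum>m\<in>keys g. if m = tmon j + lift_mon u then lookup g m else 0)"
    unfolding tcoeff_def lookup_sum
    by (intro sum.cong refl) (auto simp: lookup_single when_def tmon_lift_mon_eq_iff)
  then show ?thesis
    by (simp add: in_keys_iff)
qed

lemma tcoeff_eqI: "(\<And>j. tcoeff g j = tcoeff h j) \<Longrightarrow> g = h"
  by (metis lookup_tcoeff tmon_lift_mon_decomp poly_mapping_eqI)

lemma tcoeff_diff: "tcoeff (g - h) j = tcoeff g j - tcoeff h j"
  and tcoeff_sum: "tcoeff (\<Sum>i\<in>I. g' i) j = (\<Sum>i\<in>I. tcoeff (g' i) j)"
  and tcoeff_zero [simp]: "tcoeff 0 j = 0"
  by (rule poly_mapping_eqI; simp add: lookup_tcoeff lookup_minus lookup_sum)+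

lemma tcoeff_eq_zero_if_bound:
  assumes "\<forall>s\<in>keys g. lookup s None < N" "N \<le> i"
  shows "tcoeff g i = 0"
proof (rule poly_mapping_eqI)
  fix u
  have "tmon i + lift_mon u \<notin> keys g"
    using assms by force
  then show "lookup (tcoeff g i) u = lookup 0 u"
    by (simp add: lookup_tcoeff in_keys_iff)
qed

lemma ex_t_degree_bound:
  fixes g :: "('v option, 'k::zero) mpoly"
  shows "\<exists>N\<ge>n. \<forall>s\<in>keys g. lookup s None < N"
proof (intro exI conjI ballI)
  fix s assume "s \<in> keys g"
  then have "lookup s None \<le> (\<Sum>s\<in>keys g. lookup s None)" by (intro member_le_sum) auto
  then show "lookup s None < n + Suc (\<Sum>s\<in>keys g. lookup s None)" by simp
qed simp

lemma tcoeff_tmon_mult: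
  fixes q :: "('v::finite option, 'k::comm_ring_1) mpoly"
  shows "tcoeff (single (tmon i) c * q) j = (if i \<le> j then single 0 c * tcoeff q (j - i) else 0)"
proof (rule poly_mapping_eqI)
  fix u
  have "single (tmon i) c * q = (\<Sum>w\<in>keys q. single (tmon i + w) (c * lookup q w))"
    by (subst sum_single_lookup[symmetric]) (simp add: sum_distrib_left mult_single)
  then have "lookup (tcoeff (single (tmon i) c * q) j) u =
      (\<Sum>w\<in>keys q. if tmon i + w = tmon j + lift_mon u then c * lookup q w else 0)"
    by (simp add: lookup_tcoeff lookup_sum lookup_single when_def)
  also have "\<dots> = (if i \<le> j then c * lookup q (tmon (j - i) + lift_mon u) else 0)"
  proof -
    have "tmon i + w = tmon j + lift_mon u \<longleftrightarrow> i \<le> j \<and> w = tmon (j - i) + lift_mon u"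
      for w :: "'v option \<Rightarrow>\<^sub>0 nat"
      by (subst (1 2) option_mon_eq_iff) (auto simp: lookup_add lookup_lift_mon lookup_single)
    then show ?thesis
      by (simp add: in_keys_iff cong: if_cong)
  qed
  finally show "lookup (tcoeff (single (tmon i) c * q) j) u =
      lookup (if i \<le> j then single 0 c * tcoeff q (j - i) else 0) u"
    by (simp add: lookup_single_zero_mult lookup_tcoeff)
qed

lemma lookup_lift: "lookup (lift r) m = (if lookup m None = 0 then lookup r (restr_mon m) else 0)"
proof -
  have "lookup (lift r) m = (\<Sum>a\<in>keys r. if lookup m None = 0 \<and> a = restr_mon m then lookup r a else 0)"
    unfolding lift_def lookup_sum
    by (intro sum.cong refl) (auto simp: lookup_single when_def lift_mon_eq_iff)
  then show ?thesis
    by (auto simp: in_keys_iff)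
qed

lemma tcoeff_lift:
  fixes r :: "('v::finite, 'k::comm_ring_1) mpoly"
  shows "tcoeff (lift r) j = (if j = 0 then r else 0)"
proof (rule poly_mapping_eqI)
  fix u :: "'v \<Rightarrow>\<^sub>0 nat"
  show "lookup (tcoeff (lift r) j) u = lookup (if j = 0 then r else 0) u"
    by (simp add: lookup_tcoeff lookup_lift)
qed

lemma tcoeff_tmon_mult_lift: "tcoeff (single (tmon i) c * lift r) j = (if j = i then single 0 c * r else 0)"
  by (simp add: tcoeff_tmon_mult tcoeff_lift)

lemma tcoeff_tpoly_mult:
  "tcoeff (tpoly p * q) j = (\<Sum>i\<le>degree p. if i \<le> j then single 0 (coeff p i) * tcoeff q (j - i) else 0)"
  by (simp add: tpoly_def sum_distrib_right tcoeff_sum tcoeff_tmon_mult)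

lemma tcoeff_tpoly_mult_0: "tcoeff (tpoly p * q) 0 = single 0 (coeff p 0) * tcoeff q 0"
  by (simp add: tcoeff_tpoly_mult)

lemma tcoeff_tpoly_mult_lift: "tcoeff (tpoly p * lift r) j = single 0 (coeff p j) * r"
proof -
  have "tcoeff (tpoly p * lift r) j = (\<Sum>i\<le>degree p. if i = j then single 0 (coeff p i) * r else 0)"
    unfolding tcoeff_tpoly_mult by (intro sum.cong refl) (auto simp: tcoeff_lift)
  then show ?thesis
    by (auto simp: coeff_eq_0)
qed

lemma tpoly_t: "tpoly [:0, 1:] = single (tmon 1) (1::'k::comm_ring_1)"
  by (simp add: tpoly_def)

lemma tcoeff_sum_tmon_lift:
  "tcoeff (\<Sum>j<N. single (tmon j) 1 * lift (d j)) i = (if i < N then d i else 0)"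
  by (simp add: tcoeff_sum tcoeff_tmon_mult_lift)

lemma dvd_t_if_tcoeff_0:
  fixes g :: "('v::finite option, 'k::comm_ring_1) mpoly"
  assumes "tcoeff g 0 = 0"
  shows "\<exists>c. g = single (tmon 1) 1 * c"
proof -
  obtain N where N: "\<forall>s\<in>keys g. lookup s None < N"
    using ex_t_degree_bound by blast
  let ?c = "\<Sum>j<N. single (tmon j) 1 * lift (tcoeff g (Suc j))"
  have "g = single (tmon 1) 1 * ?c"
  proof (rule tcoeff_eqI)
    fix i
    show "tcoeff g i = tcoeff (single (tmon 1) 1 * ?c) i"
      using assms tcoeff_eq_zero_if_bound[OF N, of i]
      by (cases i) (simp_all add: tcoeff_tmon_mult tcoeff_sum_tmon_lift)
  qed
  then show ?thesis ..
qed

lemma tcoeff_contract: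
  fixes g H :: "('v::finite option, 'k::comm_ring_1) mpoly"
  assumes N: "\<forall>s\<in>keys g. lookup s None < N"
  shows "tcoeff (contract g H) k = (\<Sum>j<N. contract (tcoeff g j) (tcoeff H (k + j)))"
proof (rule poly_mapping_eqI)
  fix u
  let ?split = "\<lambda>(j, w). tmon j + lift_mon w"
  have "lookup (tcoeff (contract g H) k) u = (\<Sum>s\<in>keys g. lookup g s * lookup H (tmon k + lift_mon u + s))"
    by (simp add: lookup_tcoeff lookup_contract)
  also have "\<dots> = (\<Sum>(j, w)\<in>(SIGMA j:{..<N}. keys (tcoeff g j)).
      lookup g (tmon j + lift_mon w) * lookup H (tmon (k + j) + lift_mon (u + w)))"
  proof (rule sum.reindex_bij_witness[where i = ?split and j = "\<lambda>s. (lookup s None, restr_mon s)"])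
    fix s assume s: "s \<in> keys g"
    show "?split (lookup s None, restr_mon s) = s"
      using tmon_lift_mon_decomp[of s] by simp
    show "(lookup s None, restr_mon s) \<in> (SIGMA j:{..<N}. keys (tcoeff g j))"
      using s N tmon_lift_mon_decomp[of s] by (simp add: in_keys_iff lookup_tcoeff)
    show "(case (lookup s None, restr_mon s) of (j, w) \<Rightarrow>
        lookup g (tmon j + lift_mon w) * lookup H (tmon (k + j) + lift_mon (u + w))) =
        lookup g s * lookup H (tmon k + lift_mon u + s)"
      by (subst (3 4) tmon_lift_mon_decomp[of s]) (simp add: single_add lift_mon_add ac_simps)
  next
    fix b assume "b \<in> (SIGMA j:{..<N}. keys (tcoeff g j))"
    then show "(lookup (?split b) None, restr_mon (?split b)) = b" "?split b \<in> keys g"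
      using tmon_lift_mon_eq_iff by (auto simp: in_keys_iff lookup_tcoeff)
  qed
  also have "\<dots> = lookup (\<Sum>j<N. contract (tcoeff g j) (tcoeff H (k + j))) u"
    by (simp add: sum.Sigma[symmetric] lookup_sum lookup_contract lookup_tcoeff add.commute)
  finally show "lookup (tcoeff (contract g H) k) u = lookup (\<Sum>j<N. contract (tcoeff g j) (tcoeff H (k + j))) u" .
qed


section \<open>The annihilator of \<open>F\<close> as a triangular system\<close>

lemma dp_mult_Tdp_lift: "dp_mult (Tdp k) (lift r) = single (tmon k) 1 * lift r"
proof -
  have binom_prod_1: "(\<Prod>v\<in>keys (tmon k + b). (lookup (tmon k) v + lookup b v) choose lookup b v) = 1"
    if "b \<in> keys (lift r)" for b
  proof -
    have "lookup b None = 0"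
      using that by (auto simp: in_keys_iff lookup_lift split: if_splits)
    then show ?thesis
      by (intro prod.neutral) (auto simp: lookup_single when_def)
  qed
  have "single (tmon k) 1 * lift r = (\<Sum>b\<in>keys (lift r). single (tmon k + b) (lookup (lift r) b))"
    by (subst sum_single_lookup[symmetric]) (simp add: sum_distrib_left mult_single)
  then show ?thesis
    unfolding dp_mult_def Tdp_def by (simp add: binom_prod_1 del: of_nat_prod)
qed

lemma tcoeff_Fdual: "tcoeff (Fdual n G) j = (if j < n then G (n - 1 - j) else 0)"
proof -
  have "tcoeff (Fdual n G) j = (\<Sum>i<n. if i = n - 1 - j \<and> j < n then G i else 0)"
    unfolding Fdual_def tcoeff_sum dp_mult_Tdp_lift tcoeff_tmon_mult_lift
    by (intro sum.cong) auto
  then show ?thesis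
    by (auto simp: sum.delta' cong: if_cong)
qed

text \<open>For \<open>k \<ge> n\<close> the sum is empty, as \<open>n - k = 0\<close>.\<close>

lemma tcoeff_contract_Fdual:
  "tcoeff (contract g (Fdual n G)) k = (\<Sum>j<n - k. contract (tcoeff g j) (G (n - 1 - k - j)))"
proof -
  obtain N where N: "N \<ge> n" "\<forall>s\<in>keys g. lookup s None < N"
    using ex_t_degree_bound by blast
  have "tcoeff (contract g (Fdual n G)) k =
      (\<Sum>j<N. if j < n - k then contract (tcoeff g j) (G (n - 1 - k - j)) else 0)"
    unfolding tcoeff_contract[OF N(2)] tcoeff_Fdual
    by (intro sum.cong) (auto simp: diff_diff_add)
  also have "\<dots> = (\<Sum>j<n - k. contract (tcoeff g j) (G (n - 1 - k - j)))"
    using N(1) by (intro sum.mono_neutral_cong_right) auto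
  finally show ?thesis .
qed

definition triangular_eq :: "(nat \<Rightarrow> ('x, 'k::comm_ring_1) mpoly) \<Rightarrow> (nat \<Rightarrow> ('x, 'k) mpoly) \<Rightarrow> nat \<Rightarrow> bool" where
  "triangular_eq G d s \<longleftrightarrow> (\<Sum>j\<le>s. contract (d j) (G (s - j))) = 0"

lemma triangular_eq_cong: "(\<And>j. j \<le> s \<Longrightarrow> d j = d' j) \<Longrightarrow> triangular_eq G d s \<longleftrightarrow> triangular_eq G d' s"
  unfolding triangular_eq_def by (metis (no_types, lifting) atMost_iff sum.cong)

lemma tcoeff_contract_Fdual_eq_0_iff:
  assumes "s < n"
  shows "tcoeff (contract g (Fdual n G)) (n - 1 - s) = 0 \<longleftrightarrow> triangular_eq G (tcoeff g) s"
proof -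
  have "n - (n - 1 - s) = Suc s" "n - 1 - (n - 1 - s) = s"
    using assms by auto
  then show ?thesis
    by (simp add: tcoeff_contract_Fdual triangular_eq_def lessThan_Suc_atMost)
qed

lemma Ann_Fdual_iff: "g \<in> Ann (Fdual n G) \<longleftrightarrow> (\<forall>s<n. triangular_eq G (tcoeff g) s)"
proof -
  have "g \<in> Ann (Fdual n G) \<longleftrightarrow> (\<forall>k. tcoeff (contract g (Fdual n G)) k = 0)"
    unfolding Ann_def using tcoeff_eqI[of "contract g (Fdual n G)" 0] by auto
  also have "\<dots> \<longleftrightarrow> (\<forall>s<n. triangular_eq G (tcoeff g) s)"
  proof (intro iffI allI impI)
    fix k assume "\<forall>s<n. triangular_eq G (tcoeff g) s"
    then show "tcoeff (contract g (Fdual n G)) k = 0"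
      using tcoeff_contract_Fdual_eq_0_iff[of "n - 1 - k" n g G]
      by (cases "k < n") (simp_all add: tcoeff_contract_Fdual)
  qed (simp add: tcoeff_contract_Fdual_eq_0_iff[symmetric])
  finally show ?thesis .
qed

lemma triangular_eq_iff_split_G0:
  "triangular_eq G d s \<longleftrightarrow> contract (d s) (G 0) + (\<Sum>i\<in>{1..s}. contract (d (s - i)) (G i)) = 0"
proof -
  have "(\<Sum>j<s. contract (d j) (G (s - j))) = (\<Sum>i\<in>{1..s}. contract (d (s - i)) (G i))"
    by (rule sum.reindex_bij_witness[where i = "\<lambda>i. s - i" and j = "\<lambda>i. s - i"]) auto
  then show ?thesis
    by (simp add: triangular_eq_def lessThan_Suc_atMost[symmetric] add.commute)
qed

lemma triangular_eq_iff_split_d0: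
  "triangular_eq G d s \<longleftrightarrow> contract (d 0) (G s) + (\<Sum>j<s. contract (d (s - j)) (G j)) = 0"
proof -
  have "(\<Sum>j\<le>s. contract (d j) (G (s - j))) = (\<Sum>j\<le>s. contract (d (s - j)) (G j))"
    by (rule sum.reindex_bij_witness[where i = "\<lambda>i. s - i" and j = "\<lambda>i. s - i"]) auto
  then show ?thesis
    by (simp add: triangular_eq_def lessThan_Suc_atMost[symmetric] add.commute)
qed

lemma triangular_eq_imp_Iseq:
  assumes "triangular_eq G d s"
  shows "d s \<in> Iseq G s"
proof (rule Iseq_memI)
  show "contract (d s) (G 0) = (\<Sum>i\<in>{1..s}. contract (- d (s - i)) (G i))"
    using assms unfolding triangular_eq_iff_split_G0
    by (simp add: contract_uminus_left sum_negf eq_neg_iff_add_eq_0)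
qed


section \<open>Solving the triangular system\<close>

lemma triangular_eq_tail_in_cyc:
  assumes hyp: "\<forall>i\<le>n-1. contract_set (Iseq G i) (G (n - 1 - i)) \<subseteq> cyc (G 0)"
    and d: "\<forall>s<m. triangular_eq G d s" and "m < n"
  shows "(\<Sum>j<m. contract (d j) (G (m - j))) \<in> cyc (G 0)"
proof (rule cyc_sum)
  fix j assume "j \<in> {..<m}"
  then have j: "j < m" by simp
  let ?i = "j + (n - 1 - m)"
  have "d j \<in> Iseq G ?i"
    using Iseq_mono[of j ?i G] triangular_eq_imp_Iseq[of G d j] d j by auto
  moreover have "?i \<le> n - 1" "n - 1 - ?i = m - j"
    using j \<open>m < n\<close> by auto
  ultimately show "contract (d j) (G (m - j)) \<in> cyc (G 0)"
    using hyp unfolding contract_set_def by fastforce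
qed

text \<open>The unknowns may be confined to arbitrary sets \<open>V s\<close> meeting every residue class
  modulo \<open>Ann (G 0)\<close>; at level \<open>0\<close> the right-hand side vanishes, so there only the class
  of \<open>0\<close> matters.\<close>

lemma triangular_system_solvable:
  assumes hyp: "\<forall>i\<le>n-1. contract_set (Iseq G i) (G (n - 1 - i)) \<subseteq> cyc (G 0)"
    and V0: "\<exists>d\<in>V 0. d \<in> Ann (G 0)"
    and V: "\<And>s r. 0 < s \<Longrightarrow> s < n \<Longrightarrow> \<exists>d\<in>V s. d - r \<in> Ann (G 0)"
  shows "\<exists>d. \<forall>s<n. d s \<in> V s \<and> triangular_eq G d s"
proof -
  have "m \<le> n \<Longrightarrow> \<exists>d. \<forall>s<m. d s \<in> V s \<and> triangular_eq G d s" for m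
  proof (induction m)
    case (Suc m)
    then obtain d where d: "\<forall>s<m. d s \<in> V s \<and> triangular_eq G d s" by auto
    obtain q where q: "(\<Sum>j<m. contract (d j) (G (m - j))) = contract q (G 0)"
      using triangular_eq_tail_in_cyc[OF hyp _ Suc.prems[THEN Suc_le_lessD]] d by (auto simp: cyc_def)
    obtain e where e: "e \<in> V m" "e + q \<in> Ann (G 0)"
    proof (cases m)
      case 0
      with q have "q \<in> Ann (G 0)"
        by (simp add: Ann_def)
      moreover obtain e where "e \<in> V 0" "e \<in> Ann (G 0)"
        using V0 ..
      ultimately show ?thesis
        using that[of e] Ann_add[of e "G 0" q] \<open>m = 0\<close> by simp
    qed (use V[of m "- q"] Suc.prems that in auto)
    let ?d = "d(m := e)"
    have "triangular_eq G ?d m"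
      using q e(2) by (simp add: triangular_eq_def lessThan_Suc_atMost[symmetric] Ann_def contract_add_left add.commute)
    moreover have "triangular_eq G ?d s \<longleftrightarrow> triangular_eq G d s" if "s < m" for s
      using that by (intro triangular_eq_cong) auto
    ultimately have "\<forall>s<Suc m. ?d s \<in> V s \<and> triangular_eq G ?d s"
      using d e(1) by (auto simp: less_Suc_eq)
    then show ?case by blast
  qed simp
  then show ?thesis by blast
qed


section \<open>The kernel of the projection onto \<open>B\<close>\<close>

lemma pi_surj_by_lift: "pi_surj FB F"
  unfolding pi_surj_def
  by (metis eval_t0_eq_tcoeff tcoeff_lift zero_in_Ann diff_self)

lemma tcoeff_0_in_Ann_G0:
  assumes "0 < n" "g \<in> Ann (Fdual n G)"
  shows "tcoeff g 0 \<in> Ann (G 0)"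
  using assms unfolding Ann_Fdual_iff by (auto simp: triangular_eq_def Ann_def)

lemma tcoeff_0_sum_tpoly_mult_eq_0:
  assumes "\<forall>k<m. coeff (a k) 0 = 0"
  shows "tcoeff (\<Sum>k<m. tpoly (a k) * c k) 0 = 0"
  using assms by (simp add: tcoeff_sum tcoeff_tpoly_mult_0)

lemma ex_t_multiple_diff_in_Ann_Fdual:
  assumes hyp: "\<forall>i\<le>n-1. contract_set (Iseq G i) (G (n - 1 - i)) \<subseteq> cyc (G 0)"
    and "0 < n" and g0: "tcoeff g 0 \<in> Ann (G 0)"
  shows "\<exists>c. g - single (tmon 1) 1 * c \<in> Ann (Fdual n G)"
proof -
  have "\<exists>d. \<forall>s<n. d s \<in> (if s = 0 then {tcoeff g 0} else UNIV) \<and> triangular_eq G d s"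
  proof (rule triangular_system_solvable[OF hyp])
    show "\<exists>d\<in>(if 0 = 0 then {tcoeff g 0} else UNIV). d \<in> Ann (G 0)"
      using g0 by simp
  next
    fix s :: nat and r assume "0 < s"
    then show "\<exists>d\<in>(if s = 0 then {tcoeff g 0} else UNIV). d - r \<in> Ann (G 0)"
      using zero_in_Ann[of "G 0"] by (intro bexI[of _ r]) auto
  qed
  then obtain d where d: "\<forall>s<n. d s \<in> (if s = 0 then {tcoeff g 0} else UNIV) \<and> triangular_eq G d s" ..
  let ?h = "\<Sum>j<n. single (tmon j) 1 * lift (d j)"
  have h: "?h \<in> Ann (Fdual n G)"
    unfolding Ann_Fdual_iff
    using d by (auto simp: tcoeff_sum_tmon_lift cong: triangular_eq_cong)
  have "d 0 = tcoeff g 0"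
    using d \<open>0 < n\<close> by auto
  then have "tcoeff (g - ?h) 0 = 0"
    using \<open>0 < n\<close> by (simp add: tcoeff_diff tcoeff_sum_tmon_lift)
  then obtain c where "g - ?h = single (tmon 1) 1 * c"
    using dvd_t_if_tcoeff_0 by blast
  then have "g - single (tmon 1) 1 * c = ?h"
    by (simp add: algebra_simps)
  with h show ?thesis by metis
qed

lemma ker_eq_Fdual:
  fixes G :: "nat \<Rightarrow> ('v::finite, 'k::comm_ring_1) mpoly"
  assumes hyp: "\<forall>i\<le>n-1. contract_set (Iseq G i) (G (n - 1 - i)) \<subseteq> cyc (G 0)"
    and "0 < n"
  shows "ker_eq (G 0) (Fdual n G)"
  unfolding ker_eq_def
proof (intro allI iffI)
  fix g :: "('v option, 'k) mpoly"
  assume "eval_t0 g \<in> Ann (G 0)"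
  then obtain c where c: "g - single (tmon 1) 1 * c \<in> Ann (Fdual n G)"
    using ex_t_multiple_diff_in_Ann_Fdual[OF hyp \<open>0 < n\<close>] by (auto simp: eval_t0_eq_tcoeff)
  show "\<exists>m (a :: nat \<Rightarrow> 'k poly) c. (\<forall>k<m. coeff (a k) 0 = 0) \<and>
      g - (\<Sum>k<m. tpoly (a k) * c k) \<in> Ann (Fdual n G)"
    by (intro exI[of _ 1] exI[of _ "\<lambda>_. [:0, 1:]"] exI[of _ "\<lambda>_. c"]) (use c in \<open>simp add: tpoly_t\<close>)
next
  fix g :: "('v option, 'k) mpoly"
  assume "\<exists>m (a :: nat \<Rightarrow> 'k poly) c. (\<forall>k<m. coeff (a k) 0 = 0) \<and>
      g - (\<Sum>k<m. tpoly (a k) * c k) \<in> Ann (Fdual n G)"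
  then obtain m and a :: "nat \<Rightarrow> 'k poly" and c where
    a: "\<forall>k<m. coeff (a k) 0 = 0" and "g - (\<Sum>k<m. tpoly (a k) * c k) \<in> Ann (Fdual n G)"
    by blast
  then have "tcoeff (g - (\<Sum>k<m. tpoly (a k) * c k)) 0 \<in> Ann (G 0)"
    using tcoeff_0_in_Ann_G0[OF \<open>0 < n\<close>] by blast
  then show "eval_t0 g \<in> Ann (G 0)"
    by (simp add: eval_t0_eq_tcoeff tcoeff_diff tcoeff_0_sum_tpoly_mult_eq_0[OF a])
qed

lemma ker_eq_imp_contract_Ann_subset_sum_cyc:
  fixes G :: "nat \<Rightarrow> ('v::finite, 'k::comm_ring_1) mpoly"
  assumes ker: "ker_eq (G 0) (Fdual n G)" and i: "0 < i" "i < n"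
  shows "contract_set (Iseq G 0) (G i) \<subseteq> sum_cyc G i"
proof
  fix x assume "x \<in> contract_set (Iseq G 0) (G i)"
  then obtain f where f: "f \<in> Ann (G 0)" "x = contract f (G i)"
    by (auto simp: contract_set_def)
  have "eval_t0 (lift f) \<in> Ann (G 0)"
    using f by (simp add: eval_t0_eq_tcoeff tcoeff_lift)
  then obtain m and a :: "nat \<Rightarrow> 'k poly" and c where
    a: "\<forall>k<m. coeff (a k) 0 = 0" and h: "lift f - (\<Sum>k<m. tpoly (a k) * c k) \<in> Ann (Fdual n G)"
    using ker unfolding ker_eq_def by blast
  define h where "h = lift f - (\<Sum>k<m. tpoly (a k) * c k)"
  have h0: "tcoeff h 0 = f"
    using tcoeff_0_sum_tpoly_mult_eq_0[OF a, of c] by (simp add: h_def tcoeff_diff tcoeff_lift)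
  have "triangular_eq G (tcoeff h) i"
    using h i unfolding Ann_Fdual_iff h_def[symmetric] by auto
  then have "contract f (G i) + (\<Sum>j<i. contract (tcoeff h (i - j)) (G j)) = 0"
    unfolding triangular_eq_iff_split_d0 h0 .
  then have "contract f (G i) = (\<Sum>j<i. contract (- tcoeff h (i - j)) (G j))"
    by (simp add: contract_uminus_left sum_negf eq_neg_iff_add_eq_0)
  then have "\<exists>e. contract f (G i) = (\<Sum>j<i. contract (e j) (G j))"
    by (rule exI[of _ "\<lambda>j. - tcoeff h (i - j)"])
  then show "x \<in> sum_cyc G i"
    by (simp add: sum_cyc_def f(2))
qed


section \<open>Freeness\<close>

text \<open>Spanning and linear independence of the classes of \<open>bs\<close> in the \<open>k\<close>-vector space
  \<open>R / Ann H\<close>; the constant \<open>c \<in> k\<close> is \<open>single 0 c\<close>.\<close>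

definition lincomb :: "(nat \<Rightarrow> 'k::comm_ring_1) \<Rightarrow> ('x, 'k) mpoly list \<Rightarrow> ('x, 'k) mpoly" where
  "lincomb \<beta> bs = (\<Sum>j<length bs. single 0 (\<beta> j) * bs ! j)"

definition span_mod :: "('x, 'k::comm_ring_1) mpoly \<Rightarrow> ('x, 'k) mpoly list \<Rightarrow> ('x, 'k) mpoly set" where
  "span_mod H bs = {r. \<exists>\<beta>. r - lincomb \<beta> bs \<in> Ann H}"

definition independent_mod :: "('x, 'k::comm_ring_1) mpoly \<Rightarrow> ('x, 'k) mpoly list \<Rightarrow> bool" where
  "independent_mod H bs \<longleftrightarrow> (\<forall>\<beta>. lincomb \<beta> bs \<in> Ann H \<longrightarrow> (\<forall>j<length bs. \<beta> j = 0))"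

lemma lincomb_Cons: "lincomb \<beta> (d # bs) = single 0 (\<beta> 0) * d + lincomb (\<lambda>j. \<beta> (Suc j)) bs"
  unfolding lincomb_def length_Cons sum.lessThan_Suc_shift by simp

lemma lincomb_add: "lincomb (\<lambda>j. \<beta> j + \<gamma> j) bs = lincomb \<beta> bs + lincomb \<gamma> bs"
  by (simp add: lincomb_def single_add distrib_right sum.distrib)

lemma lincomb_smult: "lincomb (\<lambda>j. c * \<beta> j) bs = single 0 c * lincomb \<beta> bs"
  unfolding lincomb_def sum_distrib_left
  by (intro sum.cong) (simp_all add: mult.assoc[symmetric] mult_single)

lemma lincomb_zero: "lincomb (\<lambda>_. 0) bs = 0"
  by (simp add: lincomb_def)

lemma lincomb_cong: "(\<And>j. j < length bs \<Longrightarrow> \<beta> j = \<gamma> j) \<Longrightarrow> lincomb \<beta> bs = lincomb \<gamma> bs"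
  unfolding lincomb_def by (intro sum.cong) auto

lemma Ann_subset_span_mod: "Ann H \<subseteq> span_mod H bs"
  unfolding span_mod_def by (auto intro: exI[of _ "\<lambda>_. 0"] simp: lincomb_zero)

lemma span_mod_add: "r \<in> span_mod H bs \<Longrightarrow> r' \<in> span_mod H bs \<Longrightarrow> r + r' \<in> span_mod H bs"
proof -
  assume "r \<in> span_mod H bs" "r' \<in> span_mod H bs"
  then obtain \<beta> \<gamma> where "r - lincomb \<beta> bs \<in> Ann H" "r' - lincomb \<gamma> bs \<in> Ann H"
    by (auto simp: span_mod_def)
  then have "(r + r') - lincomb (\<lambda>j. \<beta> j + \<gamma> j) bs \<in> Ann H"
    using Ann_add by (fastforce simp: lincomb_add algebra_simps)
  then show ?thesis
    unfolding span_mod_def by blast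
qed

lemma span_mod_smult: "r \<in> span_mod H bs \<Longrightarrow> single 0 c * r \<in> span_mod H bs"
proof -
  assume "r \<in> span_mod H bs"
  then obtain \<beta> where "r - lincomb \<beta> bs \<in> Ann H"
    by (auto simp: span_mod_def)
  then have "single 0 c * (r - lincomb \<beta> bs) \<in> Ann H"
    by (rule Ann_mult)
  then have "single 0 c * r - lincomb (\<lambda>j. c * \<beta> j) bs \<in> Ann H"
    by (simp add: lincomb_smult algebra_simps)
  then show ?thesis
    unfolding span_mod_def by blast
qed

lemma span_mod_sum: "(\<And>i. i \<in> I \<Longrightarrow> x i \<in> span_mod H bs) \<Longrightarrow> (\<Sum>i\<in>I. x i) \<in> span_mod H bs"
  by (induction I rule: infinite_finite_induct)
    (use Ann_subset_span_mod[of H bs] zero_in_Ann[of H] in \<open>auto simp: span_mod_add\<close>)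

lemma span_mod_subset_Cons: "span_mod H bs \<subseteq> span_mod H (d # bs)"
proof
  fix r assume "r \<in> span_mod H bs"
  then obtain \<beta> where "r - lincomb \<beta> bs \<in> Ann H"
    by (auto simp: span_mod_def)
  moreover have "lincomb (case_nat 0 \<beta>) (d # bs) = lincomb \<beta> bs"
    by (simp add: lincomb_Cons)
  ultimately show "r \<in> span_mod H (d # bs)"
    unfolding span_mod_def by (metis (mono_tags) CollectI)
qed

lemma in_span_mod_Cons: "d \<in> span_mod H (d # bs)"
proof -
  have "lincomb (\<lambda>j. if j = 0 then 1 else 0) (d # bs) = d"
    by (simp add: lincomb_Cons lincomb_zero)
  then show ?thesis
    unfolding span_mod_def
    by (intro CollectI exI[of _ "\<lambda>j. if j = 0 then 1 else 0"]) (simp add: zero_in_Ann)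
qed

lemma independent_mod_Cons:
  fixes H :: "('x, 'k::field) mpoly"
  assumes bs: "independent_mod H bs" and d: "d \<notin> span_mod H bs"
  shows "independent_mod H (d # bs)"
  unfolding independent_mod_def
proof (rule allI, rule impI)
  fix \<beta> assume A: "lincomb \<beta> (d # bs) \<in> Ann H"
  have "\<beta> 0 = 0"
  proof (rule ccontr)
    assume nz: "\<beta> 0 \<noteq> 0"
    let ?c = "inverse (\<beta> 0)"
    have "single 0 ?c * lincomb \<beta> (d # bs) = d + lincomb (\<lambda>j. ?c * \<beta> (Suc j)) bs"
      using nz by (simp add: lincomb_Cons lincomb_smult distrib_left mult.assoc[symmetric] mult_single)
    also have "\<dots> = d - lincomb (\<lambda>j. - (?c * \<beta> (Suc j))) bs"
      using lincomb_smult[of "-1" "\<lambda>j. - (?c * \<beta> (Suc j))" bs] by (simp add: single_uminus)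
    finally have "d \<in> span_mod H bs"
      using Ann_mult[OF A, of "single 0 ?c"] unfolding span_mod_def by auto
    with d show False ..
  qed
  then have "lincomb (\<lambda>j. \<beta> (Suc j)) bs \<in> Ann H"
    using A by (simp add: lincomb_Cons)
  then have "\<forall>j<length bs. \<beta> (Suc j) = 0"
    using bs unfolding independent_mod_def by blast
  with \<open>\<beta> 0 = 0\<close> show "\<forall>j<length (d # bs). \<beta> j = 0"
    by (auto simp: less_Suc_eq_0_disj)
qed

lemma independent_mod_spanning_exists:
  fixes H :: "('x, 'k::field) mpoly"
  shows "\<exists>bs. independent_mod H bs \<and> set ds \<subseteq> span_mod H bs"
proof (induction ds)
  case Nil
  show ?case
    by (intro exI[of _ "[]"]) (simp add: independent_mod_def)
next
  case (Cons d ds)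
  then obtain bs where bs: "independent_mod H bs" "set ds \<subseteq> span_mod H bs"
    by blast
  show ?case
  proof (cases "d \<in> span_mod H bs")
    case True
    with bs show ?thesis by auto
  next
    case False
    then show ?thesis
      using bs independent_mod_Cons in_span_mod_Cons span_mod_subset_Cons
      by (intro exI[of _ "d # bs"]) fastforce
  qed
qed

lemma finite_monomials_below: "finite {s :: 'v::finite \<Rightarrow>\<^sub>0 nat. \<forall>v. lookup s v \<le> lookup a v}"
proof -
  have "inj (lookup :: ('v \<Rightarrow>\<^sub>0 nat) \<Rightarrow> _)"
    by (rule injI) (simp add: poly_mapping_eqI)
  then have "finite (lookup -` (Pi\<^sub>E UNIV (\<lambda>v. {..lookup a v})))"
    by (intro finite_vimageI finite_PiE) auto
  moreover have "{s. \<forall>v. lookup s v \<le> lookup a v} \<subseteq> lookup -` (Pi\<^sub>E UNIV (\<lambda>v. {..lookup a v}))"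
    unfolding PiE_UNIV_domain by auto
  ultimately show ?thesis
    by (rule finite_subset[rotated])
qed

text \<open>\<open>R / Ann H\<close> is finite-dimensional: monomials not dividing a monomial of \<open>H\<close> annihilate it.\<close>

lemma basis_mod_exists:
  fixes H :: "('v::finite, 'k::field) mpoly"
  shows "\<exists>bs. independent_mod H bs \<and> span_mod H bs = UNIV"
proof -
  define D where "D = {s. \<exists>a\<in>keys H. \<forall>v. lookup s v \<le> lookup a v}"
  have "D = (\<Union>a\<in>keys H. {s. \<forall>v. lookup s v \<le> lookup a v})"
    by (auto simp: D_def)
  then have "finite D"
    by (simp add: finite_monomials_below)
  then obtain ds where ds: "set ds = D"
    using finite_list by blast
  obtain bs where bs: "independent_mod H bs" "set (map (\<lambda>s. single s 1) ds) \<subseteq> span_mod H bs"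
    using independent_mod_spanning_exists by blast
  have "single s c \<in> span_mod H bs" for s c
  proof (cases "s \<in> D")
    case True
    then have "single s 1 \<in> span_mod H bs"
      using bs ds by auto
    then show ?thesis
      using span_mod_smult[of "single s 1" H bs c] by (simp add: mult_single)
  next
    case False
    then have "b + s \<notin> keys H" for b
      by (auto simp: D_def lookup_add)
    then have "contract (single s c) H = 0"
      by (intro poly_mapping_eqI) (simp add: lookup_contract_single in_keys_iff)
    then show ?thesis
      using Ann_subset_span_mod by (auto simp: Ann_def)
  qed
  then have "r \<in> span_mod H bs" for r
    by (subst sum_single_lookup[symmetric]) (rule span_mod_sum)
  with bs show ?thesis by auto
qed


lemma t_power_dvd_if_low_coeffs_0:
  fixes p :: "'k::comm_ring_1 poly"
  assumes "\<forall>i<n. coeff p i = 0"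
  shows "[:0, 1:] ^ n dvd p"
proof -
  have "p = monom 1 n * poly_shift n p"
    by (rule poly_eqI) (use assms in \<open>simp add: coeff_monom_mult coeff_poly_shift\<close>)
  then have "p = [:0, 1:] ^ n * poly_shift n p"
    by (simp add: monom_altdef)
  then show ?thesis
    by (metis dvd_triv_left)
qed

lemma tcoeff_sum_tpoly_mult_lift:
  fixes bs :: "('v::finite, 'k::comm_ring_1) mpoly list"
  shows "tcoeff (\<Sum>j<length bs. tpoly (a j) * lift (bs ! j)) i = lincomb (\<lambda>j. coeff (a j) i) bs"
  by (simp add: tcoeff_sum tcoeff_tpoly_mult_lift lincomb_def)

lemma lifted_basis_spans:
  fixes G :: "nat \<Rightarrow> ('v::finite, 'k::comm_ring_1) mpoly"
  assumes hyp: "\<forall>i\<le>n-1. contract_set (Iseq G i) (G (n - 1 - i)) \<subseteq> cyc (G 0)"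
    and span: "span_mod (G 0) bs = UNIV"
  shows "\<exists>a. g - (\<Sum>j<length bs. tpoly (a j) * lift (bs ! j)) \<in> Ann (Fdual n G)"
proof -
  let ?V = "\<lambda>s. {tcoeff g s - lincomb \<beta> bs | \<beta>. True}"
  have V: "\<exists>d\<in>?V s. d - r \<in> Ann (G 0)" for s r
  proof -
    obtain \<beta> where "(tcoeff g s - r) - lincomb \<beta> bs \<in> Ann (G 0)"
      using span by (auto simp: span_mod_def)
    moreover have "(tcoeff g s - r) - lincomb \<beta> bs = (tcoeff g s - lincomb \<beta> bs) - r"
      by (simp add: algebra_simps)
    ultimately show ?thesis
      by (intro bexI[of _ "tcoeff g s - lincomb \<beta> bs"]) auto
  qed
  have "\<exists>d. \<forall>s<n. d s \<in> ?V s \<and> triangular_eq G d s"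
    using V[of 0 0] by (intro triangular_system_solvable[OF hyp] V) simp
  then obtain d where d: "\<forall>s<n. d s \<in> ?V s \<and> triangular_eq G d s" ..
  then have "\<forall>s. \<exists>\<beta>. s < n \<longrightarrow> d s = tcoeff g s - lincomb \<beta> bs"
    by blast
  then have "\<exists>\<beta>. \<forall>s<n. d s = tcoeff g s - lincomb (\<beta> s) bs"
    by (rule choice)
  then obtain \<beta> where \<beta>: "\<forall>s<n. d s = tcoeff g s - lincomb (\<beta> s) bs" ..
  define a where "a j = (\<Sum>s<n. monom (\<beta> s j) s)" for j
  let ?E = "\<Sum>j<length bs. tpoly (a j) * lift (bs ! j)"
  have "tcoeff (g - ?E) s = d s" if "s < n" for s
    using that \<beta> by (simp add: tcoeff_diff tcoeff_sum_tpoly_mult_lift a_def coeff_sum)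
  then have "g - ?E \<in> Ann (Fdual n G)"
    unfolding Ann_Fdual_iff using d by (auto cong: triangular_eq_cong)
  then show ?thesis
    by (rule exI[of _ a])
qed

lemma lifted_independent_torsion_free:
  fixes G :: "nat \<Rightarrow> ('v::finite, 'k::comm_ring_1) mpoly"
  assumes indep: "independent_mod (G 0) bs"
    and A: "(\<Sum>j<length bs. tpoly (a j) * lift (bs ! j)) \<in> Ann (Fdual n G)"
  shows "\<forall>j<length bs. [:0, 1:] ^ n dvd a j"
proof -
  let ?E = "\<Sum>j<length bs. tpoly (a j) * lift (bs ! j)"
  have "\<forall>j<length bs. coeff (a j) i = 0" if "i < n" for i
    using that
  proof (induction i rule: less_induct)
    case (less i)
    have "tcoeff ?E l = 0" if "l < i" for l
      using less.IH[of l] that less.prems lincomb_cong[of bs _ "\<lambda>_. 0"]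
      by (simp add: tcoeff_sum_tpoly_mult_lift lincomb_zero)
    moreover have "triangular_eq G (tcoeff ?E) i"
      using A less.prems unfolding Ann_Fdual_iff by blast
    ultimately have "contract (tcoeff ?E i) (G 0) = 0"
      unfolding triangular_eq_iff_split_G0 by simp
    then have "lincomb (\<lambda>j. coeff (a j) i) bs \<in> Ann (G 0)"
      by (simp add: Ann_def tcoeff_sum_tpoly_mult_lift)
    with indep show ?case
      unfolding independent_mod_def by blast
  qed
  then show ?thesis
    by (auto intro: t_power_dvd_if_low_coeffs_0)
qed

lemma free_over_A_Fdual:
  fixes G :: "nat \<Rightarrow> ('v::finite, 'k::field) mpoly"
  assumes hyp: "\<forall>i\<le>n-1. contract_set (Iseq G i) (G (n - 1 - i)) \<subseteq> cyc (G 0)"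
  shows "free_over_A n (Fdual n G)"
proof -
  obtain bs where "independent_mod (G 0) bs" "span_mod (G 0) bs = UNIV"
    using basis_mod_exists by blast
  then show ?thesis
    unfolding free_over_A_def
    using lifted_basis_spans[OF hyp] lifted_independent_torsion_free
    by (intro exI[of _ "length bs"] exI[of _ "\<lambda>j. lift (bs ! j)"]) blast
qed


theorem theorem2p1:
  fixes FB :: "('v::finite, 'k::field) mpoly"
    and G :: "nat \<Rightarrow> ('v, 'k) mpoly"
    and n jB :: nat
  assumes "n \<ge> 2"
    and "homogeneous jB FB"
    and "G 0 = FB"
    and "\<forall>i\<in>{1..n-1}. homogeneous (jB + i) (G i)"
  shows "((\<forall>i\<le>n-1. contract_set (Iseq G i) (G (n - 1 - i)) \<subseteq> cyc FB)
            \<longrightarrow> coexact FB (Fdual n G) \<and> free_extension n FB (Fdual n G))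
       \<and> (free_extension n FB (Fdual n G)
            \<longrightarrow> (\<forall>i\<in>{1..n-1}. contract_set (Iseq G 0) (G i) \<subseteq> sum_cyc G i))"
proof (intro conjI impI)
  assume "\<forall>i\<le>n-1. contract_set (Iseq G i) (G (n - 1 - i)) \<subseteq> cyc FB"
  then have hyp: "\<forall>i\<le>n-1. contract_set (Iseq G i) (G (n - 1 - i)) \<subseteq> cyc (G 0)"
    using assms(3) by simp
  have "0 < n"
    using assms(1) by simp
  have "pi_surj FB (Fdual n G)" "ker_eq FB (Fdual n G)" "free_over_A n (Fdual n G)"
    using pi_surj_by_lift ker_eq_Fdual[OF hyp \<open>0 < n\<close>] free_over_A_Fdual[OF hyp] assms(3)
    by simp_all
  then show "coexact FB (Fdual n G)" "free_extension n FB (Fdual n G)"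
    by (simp_all add: coexact_def free_extension_def)
next
  assume "free_extension n FB (Fdual n G)"
  then have "ker_eq (G 0) (Fdual n G)"
    using assms(3) by (simp add: free_extension_def)
  moreover have "0 < i" "i < n" if "i \<in> {1..n-1}" for i
    using that assms(1) by auto
  ultimately show "\<forall>i\<in>{1..n-1}. contract_set (Iseq G 0) (G i) \<subseteq> sum_cyc G i"
    using ker_eq_imp_contract_Ann_subset_sum_cyc by blast
qed

end
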